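(* Let $T$, $\mathcal{S}=\mathcal{S}_+\cup\mathcal{S}_-$, $\Psi$, $U$, $\mu$, $P_\mu$ and $V_\mu$ be as in the context. Consider the following three discrete-time QBDs on phase space $\mathcal{S}$: (i) the QBD with blocks $\Theta_{-1}=\begin{bmatrix}0&\frac12P_{\mu+-}\\0&P_{\mu--}\end{bmatrix}$, $\Theta_0=\begin{bmatrix}\frac12P_{\mu++}&0\\P_{\mu-+}&0\end{bmatrix}$, $\Theta_1=\frac12\begin{bmatrix}I&0\\0&0\end{bmatrix}$; (ii) the QBD with blocks $B'_{-1}=\frac12\begin{bmatrix}0&P_{\mu+-}\\0&P_{\mu--}\end{bmatrix}$, $B'_0=\frac12\begin{bmatrix}P_{\mu++}&0\\P_{\mu-+}&I\end{bmatrix}$, $B'_1=\frac12\begin{bmatrix}I&0\\0&0\end{bmatrix}$; (iii) the QBD with blocks $B_{-1}=\begin{bmatrix}0&(I-\mu^{-1}T_{++})^{-1}P_{\mu+-}\\0&V_\mu\end{bmatrix}$, $B_0=0$, $B_1=\begin{bmatrix}(I-\mu^{-1}T_{++})^{-1}&0\\0&0\end{bmatrix}$. Then the QBD in (ii) has the same $\mathcal{G}$-matrix as the QBD in (i) and the same $\mathcal{G}$-matrix as the QBD in (iii).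
   Context: $T$ is the generator of a continuous-time Markov chain on a finite set $\mathcal{S}=\mathcal{S}_+\cup\mathcal{S}_-$ (disjoint, both nonempty), partitioned into blocks $T_{++},T_{+-},T_{-+},T_{--}$ according to $\mathcal{S}_\pm$. $\Psi$ is the minimal nonnegative solution of $T_{+-}+\Psi T_{--}+T_{++}\Psi+\Psi T_{-+}\Psi=0$ (the first-return probability matrix of the unit-rate fluid queue with phase generator $T$, rates $+1$ on $\mathcal{S}_+$ and $-1$ on $\mathcal{S}_-$), and $U:=T_{--}+T_{-+}\Psi$. $\mu>0$ satisfies $\mu\ge\max_i|T_{ii}|$; $P_\mu:=I+\mu^{-1}T$ with blocks $P_{\mu++}$ etc., and $V_\mu:=I+\mu^{-1}U$. A discrete-time quasi-birth-death process (QBD) with transition blocks $L_{-1},L_0,L_1$ is a Markov chain $\{(Y_n,\kappa_n)\}$ on $\mathbb{Z}\times\mathcal{S}$ with $\mathbb{P}[Y_n=k+d,\kappa_n=j\mid Y_{n-1}=k,\kappa_{n-1}=i]=(L_d)_{ij}$ for $d\in\{-1,0,1\}$. Its $\mathcal{G}$-matrix has entries $\mathcal{G}_{ij}=\mathbb{P}[\theta<\infty,\kappa_\theta=j\mid Y_0=k,\kappa_0=i]$ with $\theta=\inf\{n>0:Y_n=k-1\}$. Matrices are partitioned into blocks according to $\mathcal{S}_+,\mathcal{S}_-$. *)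

theory Defs
  imports Complex_Main
begin

text \<open>Phase space S = S_+ \<union> S_- is modelled as the disjoint sum type 'p + 'm
  (Inl = phases in S_+, Inr = phases in S_-), both finite (and nonempty, as all types are).\<close>

definition mmul :: "('a \<Rightarrow> 'b::finite \<Rightarrow> real) \<Rightarrow> ('b \<Rightarrow> 'c \<Rightarrow> real) \<Rightarrow> 'a \<Rightarrow> 'c \<Rightarrow> real" where
  "mmul A B = (\<lambda>i k. \<Sum>j\<in>UNIV. A i j * B j k)"

definition idm :: "'a \<Rightarrow> 'a \<Rightarrow> real" where
  "idm = (\<lambda>i j. if i = j then 1 else 0)"

definition zm :: "'a \<Rightarrow> 'b \<Rightarrow> real" where
  "zm = (\<lambda>i j. 0)"

definition minv :: "('a::finite \<Rightarrow> 'a \<Rightarrow> real) \<Rightarrow> 'a \<Rightarrow> 'a \<Rightarrow> real" where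
  "minv A = (THE X. mmul A X = idm \<and> mmul X A = idm)"

definition blk :: "('p \<Rightarrow> 'p \<Rightarrow> real) \<Rightarrow> ('p \<Rightarrow> 'm \<Rightarrow> real) \<Rightarrow> ('m \<Rightarrow> 'p \<Rightarrow> real)
    \<Rightarrow> ('m \<Rightarrow> 'm \<Rightarrow> real) \<Rightarrow> ('p + 'm) \<Rightarrow> ('p + 'm) \<Rightarrow> real" where
  "blk A B C D = (\<lambda>x y. case x of
      Inl i \<Rightarrow> (case y of Inl j \<Rightarrow> A i j | Inr j \<Rightarrow> B i j)
    | Inr i \<Rightarrow> (case y of Inl j \<Rightarrow> C i j | Inr j \<Rightarrow> D i j))"

definition bpp :: "(('p + 'm) \<Rightarrow> ('p + 'm) \<Rightarrow> real) \<Rightarrow> 'p \<Rightarrow> 'p \<Rightarrow> real" where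
  "bpp M = (\<lambda>i j. M (Inl i) (Inl j))"
definition bpm :: "(('p + 'm) \<Rightarrow> ('p + 'm) \<Rightarrow> real) \<Rightarrow> 'p \<Rightarrow> 'm \<Rightarrow> real" where
  "bpm M = (\<lambda>i j. M (Inl i) (Inr j))"
definition bmp :: "(('p + 'm) \<Rightarrow> ('p + 'm) \<Rightarrow> real) \<Rightarrow> 'm \<Rightarrow> 'p \<Rightarrow> real" where
  "bmp M = (\<lambda>i j. M (Inr i) (Inl j))"
definition bmm :: "(('p + 'm) \<Rightarrow> ('p + 'm) \<Rightarrow> real) \<Rightarrow> 'm \<Rightarrow> 'm \<Rightarrow> real" where
  "bmm M = (\<lambda>i j. M (Inr i) (Inr j))"

definition is_generator :: "('s::finite \<Rightarrow> 's \<Rightarrow> real) \<Rightarrow> bool" where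
  "is_generator T \<longleftrightarrow> (\<forall>i j. i \<noteq> j \<longrightarrow> 0 \<le> T i j) \<and> (\<forall>i. (\<Sum>j\<in>UNIV. T i j) = 0)"

definition riccati :: "(('p::finite + 'm::finite) \<Rightarrow> ('p + 'm) \<Rightarrow> real) \<Rightarrow> ('p \<Rightarrow> 'm \<Rightarrow> real) \<Rightarrow> bool" where
  "riccati T X \<longleftrightarrow> (\<forall>i j. bpm T i j + mmul X (bmm T) i j + mmul (bpp T) X i j
                            + mmul (mmul X (bmp T)) X i j = 0)"

definition is_min_nonneg_sol :: "(('p::finite + 'm::finite) \<Rightarrow> ('p + 'm) \<Rightarrow> real) \<Rightarrow> ('p \<Rightarrow> 'm \<Rightarrow> real) \<Rightarrow> bool" where
  "is_min_nonneg_sol T X \<longleftrightarrow> riccati T X \<and> (\<forall>i j. 0 \<le> X i j) \<and>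
     (\<forall>Y. riccati T Y \<and> (\<forall>i j. 0 \<le> Y i j) \<longrightarrow> (\<forall>i j. X i j \<le> Y i j))"

text \<open>Discrete-time QBD with blocks Lm = L_{-1}, L0 = L_0, Lp = L_1 (level-homogeneous, so we
  start at level 0).  qbd_taboo Lm L0 Lp n k i j is the probability that, started at (0,i),
  the chain is at (k,j) at time n having stayed at levels \<ge> 0 at all times 0..n.\<close>
fun qbd_taboo :: "('s::finite \<Rightarrow> 's \<Rightarrow> real) \<Rightarrow> ('s \<Rightarrow> 's \<Rightarrow> real) \<Rightarrow> ('s \<Rightarrow> 's \<Rightarrow> real)
    \<Rightarrow> nat \<Rightarrow> int \<Rightarrow> 's \<Rightarrow> 's \<Rightarrow> real" where
  "qbd_taboo Lm L0 Lp 0 k i j = (if k = 0 \<and> i = j then 1 else 0)"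
| "qbd_taboo Lm L0 Lp (Suc n) k i j =
     (if k < 0 then 0 else
       (\<Sum>l\<in>UNIV. qbd_taboo Lm L0 Lp n (k + 1) i l * Lm l j
                 + qbd_taboo Lm L0 Lp n k i l * L0 l j
                 + qbd_taboo Lm L0 Lp n (k - 1) i l * Lp l j))"

text \<open>G-matrix: G_ij = P[theta < \<infinity>, kappa_theta = j | Y_0 = 0, kappa_0 = i], with
  theta the first passage time to level -1, written as the sum over theta = n+1 of the
  probabilities of the (disjoint) events {theta = n+1, kappa_theta = j}.\<close>
definition qbd_G :: "('s::finite \<Rightarrow> 's \<Rightarrow> real) \<Rightarrow> ('s \<Rightarrow> 's \<Rightarrow> real) \<Rightarrow> ('s \<Rightarrow> 's \<Rightarrow> real)
    \<Rightarrow> 's \<Rightarrow> 's \<Rightarrow> real" where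
  "qbd_G Lm L0 Lp = (\<lambda>i j. \<Sum>n. \<Sum>l\<in>UNIV. qbd_taboo Lm L0 Lp n 0 i l * Lm l j)"

end

theory Submission
  imports Defs
begin

text \<open>For a QBD with nonnegative blocks, \<open>qbd_G\<close> is the limit of the first-passage matrices
  \<open>F\<^sub>N(a)\<close> (reaching level \<open>-1\<close> from level \<open>a\<close> within \<open>N\<close> steps). They obey a first-step
  recursion, are bounded by \<open>X\<^sup>a\<^sup>+\<^sup>1\<close> for every nonnegative supersolution \<open>X\<close> of
  \<open>X = L\<^sub>-\<^sub>1 + L\<^sub>0 X + L\<^sub>1 X\<^sup>2\<close>, and are sub- and supermultiplicative in the level, so the
  G-matrix is the minimal nonnegative solution of that equation.

  For the three QBDs of the theorem, \<open>Z = [0 \<Psi>; 0 V\<^sub>\<mu>]\<close> is a nonnegative solution (the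
  \<open>S\<^sub>+S\<^sub>-\<close> block of the equation is the Riccati equation for \<open>\<Psi>\<close>, rewritten with \<open>P\<^sub>\<mu>\<close>), so
  each G-matrix is dominated by \<open>Z\<close> and has the form \<open>[0 B; 0 D]\<close>. For (ii) the equation
  forces \<open>B\<close> to solve the Riccati equation, hence \<open>B = \<Psi>\<close> by minimality of \<open>\<Psi>\<close>. QBD (i) has
  the same solutions as (ii). For (iii) the equation gives \<open>D = V\<^sub>\<mu>\<close>, and \<open>[0 B; 0 V\<^sub>\<mu>]\<close>
  is a supersolution for (ii), so \<open>Z \<le> [0 B; 0 V\<^sub>\<mu>]\<close> by minimality of the G-matrix of (ii).\<close>

section \<open>Matrix algebra\<close>

definition nonneg :: "('a \<Rightarrow> 'b \<Rightarrow> real) \<Rightarrow> bool" where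
  "nonneg A \<longleftrightarrow> (\<forall>i j. 0 \<le> A i j)"

lemma mat_le_iff: "(A::'a \<Rightarrow> 'b \<Rightarrow> real) \<le> B \<longleftrightarrow> (\<forall>i j. A i j \<le> B i j)"
  by (simp add: le_fun_def)

lemma zm_apply [simp]: "zm i j = 0"
  by (simp add: zm_def)

lemma nonneg_zm: "nonneg zm"
  by (simp add: nonneg_def)

lemma nonneg_idm: "nonneg idm"
  by (simp add: nonneg_def idm_def)

lemma nonneg_halve: "nonneg A \<Longrightarrow> nonneg (\<lambda>i j. A i j / 2)"
  by (simp add: nonneg_def)

lemma nonneg_le_zm_iff: "nonneg A \<Longrightarrow> A \<le> zm \<longleftrightarrow> A = zm"
  by (auto simp: nonneg_def mat_le_iff intro!: ext antisym)

lemma mmul_assoc: "mmul (mmul A B) C = mmul A (mmul B C)"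
proof (intro ext)
  fix i l
  have "mmul (mmul A B) C i l = (\<Sum>j\<in>UNIV. \<Sum>k\<in>UNIV. A i k * B k j * C j l)"
    by (simp add: mmul_def sum_distrib_right)
  also have "\<dots> = (\<Sum>k\<in>UNIV. \<Sum>j\<in>UNIV. A i k * B k j * C j l)"
    by (rule sum.swap)
  also have "\<dots> = mmul A (mmul B C) i l"
    by (simp add: mmul_def sum_distrib_left mult.assoc)
  finally show "mmul (mmul A B) C i l = mmul A (mmul B C) i l" .
qed

lemma mmul_add_left [simp]: "mmul (\<lambda>i j. A i j + B i j) C i j = mmul A C i j + mmul B C i j"
  by (simp add: mmul_def distrib_right sum.distrib)

lemma mmul_add_right [simp]: "mmul C (\<lambda>i j. A i j + B i j) i j = mmul C A i j + mmul C B i j"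
  by (simp add: mmul_def distrib_left sum.distrib)

lemma mmul_diff_left [simp]: "mmul (\<lambda>i j. A i j - B i j) C i j = mmul A C i j - mmul B C i j"
  by (simp add: mmul_def left_diff_distrib sum_subtractf)

lemma mmul_diff_right [simp]: "mmul C (\<lambda>i j. A i j - B i j) i j = mmul C A i j - mmul C B i j"
  by (simp add: mmul_def right_diff_distrib sum_subtractf)

lemma mmul_scale_left [simp]: "mmul (\<lambda>i j. c * A i j) C i j = c * mmul A C i j"
  by (simp add: mmul_def sum_distrib_left mult.assoc)

lemma mmul_scale_right [simp]: "mmul C (\<lambda>i j. c * A i j) i j = c * mmul C A i j"
  by (simp add: mmul_def sum_distrib_left mult.left_commute)

lemma mmul_divide_left [simp]: "mmul (\<lambda>i j. A i j / c) C i j = mmul A C i j / c"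
  by (simp add: mmul_def sum_divide_distrib)

lemma mmul_divide_right [simp]: "mmul C (\<lambda>i j. A i j / c) i j = mmul C A i j / c"
  by (simp add: mmul_def sum_divide_distrib)

lemma mmul_zm_left [simp]: "mmul zm C = zm"
  by (simp add: mmul_def zm_def)

lemma mmul_zm_right [simp]: "mmul C zm = zm"
  by (simp add: mmul_def zm_def)

lemma zm_lambda [simp]: "(\<lambda>i j. 0) = zm"
  by (simp add: zm_def)

lemma mmul_idm_left [simp]: "mmul idm C = C"
proof (intro ext)
  fix x y
  have "mmul idm C x y = (\<Sum>j\<in>UNIV. if x = j then C j y else 0)"
    unfolding mmul_def idm_def by (intro sum.cong) auto
  then show "mmul idm C x y = C x y" by simp
qed

lemma mmul_idm_right [simp]: "mmul C idm = C"
proof (intro ext)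
  fix x y
  have "mmul C idm x y = (\<Sum>j\<in>UNIV. if j = y then C x j else 0)"
    unfolding mmul_def idm_def by (intro sum.cong) auto
  then show "mmul C idm x y = C x y" by simp
qed

lemma mmul_sum_right: "mmul C (\<lambda>i j. \<Sum>n\<in>N. A n i j) i j = (\<Sum>n\<in>N. mmul C (A n) i j)"
  by (simp add: mmul_def sum_distrib_left sum.swap[of _ N])

lemma mmul_suminf_right:
  assumes "\<And>l j. summable (\<lambda>k. A k l j)"
  shows "mmul C (\<lambda>i j. \<Sum>k. A k i j) i j = (\<Sum>k. mmul C (A k) i j)"
  unfolding mmul_def using assms
  by (simp add: suminf_mult[symmetric] summable_mult suminf_sum)

lemma mmul_suminf_left:
  assumes "\<And>i l. summable (\<lambda>k. A k i l)"
  shows "mmul (\<lambda>i j. \<Sum>k. A k i j) C i j = (\<Sum>k. mmul (A k) C i j)"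
  unfolding mmul_def using assms
  by (simp add: suminf_mult2 summable_mult2 suminf_sum[symmetric])

lemma mmul_tendsto:
  assumes "\<And>i j. (\<lambda>N. A N i j) \<longlonglongrightarrow> A' i j" and "\<And>i j. (\<lambda>N. B N i j) \<longlonglongrightarrow> B' i j"
  shows "(\<lambda>N. mmul (A N) (B N) i j) \<longlonglongrightarrow> mmul A' B' i j"
  unfolding mmul_def by (intro tendsto_intros assms)

lemma mmul_nonneg: "nonneg A \<Longrightarrow> nonneg B \<Longrightarrow> nonneg (mmul A B)"
  by (simp add: nonneg_def mmul_def sum_nonneg)

lemma mmul_mono: "nonneg A \<Longrightarrow> nonneg B \<Longrightarrow> A \<le> A' \<Longrightarrow> B \<le> B' \<Longrightarrow> mmul A B \<le> mmul A' B'"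
  unfolding nonneg_def mat_le_iff mmul_def
  by (auto intro!: sum_mono mult_mono order_trans[of 0 "A _ _" "A' _ _"])

lemma mmul_mono_left: "nonneg C \<Longrightarrow> A \<le> B \<Longrightarrow> mmul A C i j \<le> mmul B C i j"
  unfolding nonneg_def mat_le_iff mmul_def by (auto intro!: sum_mono mult_right_mono)

lemma mmul_mono_right: "nonneg C \<Longrightarrow> A \<le> B \<Longrightarrow> mmul C A i j \<le> mmul C B i j"
  unfolding nonneg_def mat_le_iff mmul_def by (auto intro!: sum_mono mult_left_mono)

lemma minv_eqI:
  assumes "mmul A X = idm" and "mmul X A = idm"
  shows "minv A = X"
  unfolding minv_def
proof (rule the_equality)
  fix Y assume Y: "mmul A Y = idm \<and> mmul Y A = idm"
  have "Y = mmul (mmul Y A) X" using assms(1) by (simp add: mmul_assoc)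
  then show "Y = X" using Y by simp
qed (use assms in simp)

fun mpow :: "('s::finite \<Rightarrow> 's \<Rightarrow> real) \<Rightarrow> nat \<Rightarrow> 's \<Rightarrow> 's \<Rightarrow> real" where
  "mpow X 0 = idm"
| "mpow X (Suc n) = mmul X (mpow X n)"

lemma mpow_Suc_right: "mpow X (Suc n) = mmul (mpow X n) X"
proof (induction n)
  case (Suc n)
  then show ?case by (metis mmul_assoc mpow.simps(2))
qed simp

lemma mpow_nonneg: "nonneg X \<Longrightarrow> nonneg (mpow X n)"
  by (induction n) (auto simp: nonneg_idm mmul_nonneg)

lemma mpow_row_sum_le:
  assumes Q: "nonneg Q" and row: "\<And>i. (\<Sum>j\<in>UNIV. Q i j) \<le> c"
  shows "(\<Sum>j\<in>UNIV. mpow Q k i j) \<le> c ^ k"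
proof (induction k arbitrary: i)
  case 0
  have "(\<Sum>j\<in>UNIV. idm i j) = (1::real)" by (simp add: idm_def)
  then show ?case by simp
next
  case (Suc k)
  have c: "0 \<le> c"
    using order_trans[OF sum_nonneg row[of i]] Q by (simp add: nonneg_def)
  have "(\<Sum>j\<in>UNIV. mpow Q (Suc k) i j) = (\<Sum>j\<in>UNIV. \<Sum>l\<in>UNIV. Q i l * mpow Q k l j)"
    by (simp add: mmul_def)
  also have "\<dots> = (\<Sum>l\<in>UNIV. Q i l * (\<Sum>j\<in>UNIV. mpow Q k l j))"
    by (subst sum.swap) (simp add: sum_distrib_left)
  also have "\<dots> \<le> (\<Sum>l\<in>UNIV. Q i l * c ^ k)"
    using Q Suc.IH by (intro sum_mono mult_left_mono) (auto simp: nonneg_def)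
  also have "\<dots> \<le> c ^ Suc k"
    using row[of i] c by (simp add: sum_distrib_right[symmetric] mult_right_mono)
  finally show ?case .
qed

definition neumann :: "('s::finite \<Rightarrow> 's \<Rightarrow> real) \<Rightarrow> 's \<Rightarrow> 's \<Rightarrow> real" where
  "neumann Q = (\<lambda>i j. \<Sum>k. mpow Q k i j)"

locale substochastic_contraction =
  fixes Q :: "'s::finite \<Rightarrow> 's \<Rightarrow> real" and c :: real
  assumes nonneg_Q: "nonneg Q" and row_sum_le: "\<And>i. (\<Sum>j\<in>UNIV. Q i j) \<le> c" and c_less_1: "c < 1"
begin

lemma mpow_nonneg_entry: "0 \<le> mpow Q k i j"
  using mpow_nonneg[OF nonneg_Q] by (simp add: nonneg_def)

lemma mpow_entry_le: "mpow Q k i j \<le> c ^ k"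
proof -
  have "mpow Q k i j \<le> (\<Sum>j\<in>UNIV. mpow Q k i j)"
    using mpow_nonneg_entry by (intro member_le_sum) auto
  then show ?thesis using mpow_row_sum_le[OF nonneg_Q row_sum_le] by (meson order_trans)
qed

lemma c_nonneg: "0 \<le> c"
  using order_trans[OF sum_nonneg row_sum_le] nonneg_Q by (simp add: nonneg_def)

lemma summable_mpow: "summable (\<lambda>k. mpow Q k i j)"
  by (rule summable_comparison_test'[OF summable_geometric[of c], of 0])
     (use mpow_entry_le mpow_nonneg_entry c_nonneg c_less_1 in auto)

lemma mpow_tendsto_0: "(\<lambda>k. mpow Q k i j) \<longlonglongrightarrow> 0"
  using summable_mpow by (rule summable_LIMSEQ_zero)

lemma nonneg_neumann: "nonneg (neumann Q)"
  unfolding neumann_def nonneg_def using summable_mpow mpow_nonneg_entry by (auto intro!: suminf_nonneg)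

lemma telescope_mpow: "(\<Sum>k. mpow Q k i j - mpow Q (Suc k) i j) = idm i j"
  using sums_unique[OF telescope_sums'[OF mpow_tendsto_0]] by simp

lemma neumann_inverse:
  shows "mmul (\<lambda>i j. idm i j - Q i j) (neumann Q) = idm"
    and "mmul (neumann Q) (\<lambda>i j. idm i j - Q i j) = idm"
proof (rule_tac [!] ext, rule_tac [!] ext)
  fix i j
  have "mmul (\<lambda>i j. idm i j - Q i j) (neumann Q) i j
      = (\<Sum>k. mmul (\<lambda>i j. idm i j - Q i j) (mpow Q k) i j)"
    unfolding neumann_def by (rule mmul_suminf_right[OF summable_mpow])
  also have "\<dots> = idm i j"
    using telescope_mpow by simp
  finally show "mmul (\<lambda>i j. idm i j - Q i j) (neumann Q) i j = idm i j" .
  have "mmul (neumann Q) (\<lambda>i j. idm i j - Q i j) i j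
      = (\<Sum>k. mmul (mpow Q k) (\<lambda>i j. idm i j - Q i j) i j)"
    unfolding neumann_def by (rule mmul_suminf_left[OF summable_mpow])
  also have "\<dots> = idm i j"
    using telescope_mpow by (simp add: mpow_Suc_right del: mpow.simps(2))
  finally show "mmul (neumann Q) (\<lambda>i j. idm i j - Q i j) i j = idm i j" .
qed

end

section \<open>Block matrices\<close>

lemma sum_UNIV_Plus:
  "(\<Sum>x\<in>(UNIV::('p::finite + 'm::finite) set). g x) = (\<Sum>a\<in>UNIV. g (Inl a)) + (\<Sum>b\<in>UNIV. g (Inr b))"
  using sum.Plus[of "UNIV::'p set" "UNIV::'m set" g] by (simp add: comp_def)

lemma blk_apply [simp]:
  "blk A B C D (Inl i) (Inl j) = A i j" "blk A B C D (Inl i) (Inr k) = B i k"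
  "blk A B C D (Inr k) (Inl j) = C k j" "blk A B C D (Inr k) (Inr l) = D k l"
  by (simp_all add: blk_def)

lemma blocks_blk [simp]:
  "bpp (blk A B C D) = A" "bpm (blk A B C D) = B" "bmp (blk A B C D) = C" "bmm (blk A B C D) = D"
  by (simp_all add: bpp_def bpm_def bmp_def bmm_def)

lemma blk_eq_iff: "blk A B C D = blk A' B' C' D' \<longleftrightarrow> A = A' \<and> B = B' \<and> C = C' \<and> D = D'"
  by (metis blocks_blk)

lemma blocks_add:
  "bpp (\<lambda>x y. F x y + G x y) = (\<lambda>i j. bpp F i j + bpp G i j)"
  "bpm (\<lambda>x y. F x y + G x y) = (\<lambda>i j. bpm F i j + bpm G i j)"
  "bmp (\<lambda>x y. F x y + G x y) = (\<lambda>i j. bmp F i j + bmp G i j)"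
  "bmm (\<lambda>x y. F x y + G x y) = (\<lambda>i j. bmm F i j + bmm G i j)"
  by (simp_all add: bpp_def bpm_def bmp_def bmm_def)

lemma blk_blocks: "blk (bpp X) (bpm X) (bmp X) (bmm X) = X"
  by (intro ext) (auto simp: blk_def bpp_def bpm_def bmp_def bmm_def split: sum.splits)

lemma block_mat_eq_iff:
  "(X::('p + 'm) \<Rightarrow> ('p + 'm) \<Rightarrow> real) = Y \<longleftrightarrow>
     bpp X = bpp Y \<and> bpm X = bpm Y \<and> bmp X = bmp Y \<and> bmm X = bmm Y"
  by (metis blk_blocks)

lemma block_mat_le_iff:
  "(X::('p + 'm) \<Rightarrow> ('p + 'm) \<Rightarrow> real) \<le> Y \<longleftrightarrow>
     bpp X \<le> bpp Y \<and> bpm X \<le> bpm Y \<and> bmp X \<le> bmp Y \<and> bmm X \<le> bmm Y"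
  unfolding mat_le_iff bpp_def bpm_def bmp_def bmm_def by (metis sum.exhaust)

lemma nonneg_blk_iff: "nonneg (blk A B C D) \<longleftrightarrow> nonneg A \<and> nonneg B \<and> nonneg C \<and> nonneg D"
  by (auto simp: nonneg_def blk_def split: sum.splits)

lemma nonneg_blocks: "nonneg X \<Longrightarrow> nonneg (bpp X) \<and> nonneg (bpm X) \<and> nonneg (bmp X) \<and> nonneg (bmm X)"
  by (metis blk_blocks nonneg_blk_iff)

lemma mmul_blk: "mmul (blk A B C D) (blk E F G H) = blk (\<lambda>i j. mmul A E i j + mmul B G i j)
   (\<lambda>i j. mmul A F i j + mmul B H i j) (\<lambda>i j. mmul C E i j + mmul D G i j) (\<lambda>i j. mmul C F i j + mmul D H i j)"
  by (intro ext) (auto simp: mmul_def sum_UNIV_Plus blk_def split: sum.splits)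

section \<open>The G-matrix as minimal solution of the matrix-quadratic equation\<close>

definition qbd_rhs :: "('s::finite \<Rightarrow> 's \<Rightarrow> real) \<Rightarrow> ('s \<Rightarrow> 's \<Rightarrow> real) \<Rightarrow> ('s \<Rightarrow> 's \<Rightarrow> real)
    \<Rightarrow> ('s \<Rightarrow> 's \<Rightarrow> real) \<Rightarrow> 's \<Rightarrow> 's \<Rightarrow> real" where
  "qbd_rhs Lm L0 Lp X = (\<lambda>i j. Lm i j + mmul L0 X i j + mmul Lp (mmul X X) i j)"

text \<open>\<open>taboo Lm L0 Lp n a k\<close> is the matrix of probabilities of moving from level \<open>a\<close> to level \<open>k\<close>
  in \<open>n\<close> steps without visiting a negative level; \<open>qbd_taboo\<close> is the case \<open>a = 0\<close>.\<close>

fun taboo :: "('s::finite \<Rightarrow> 's \<Rightarrow> real) \<Rightarrow> ('s \<Rightarrow> 's \<Rightarrow> real) \<Rightarrow> ('s \<Rightarrow> 's \<Rightarrow> real)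
    \<Rightarrow> nat \<Rightarrow> int \<Rightarrow> int \<Rightarrow> 's \<Rightarrow> 's \<Rightarrow> real" where
  "taboo Lm L0 Lp 0 a k = (if k = a \<and> 0 \<le> a then idm else zm)"
| "taboo Lm L0 Lp (Suc n) a k = (if k < 0 then zm else
     (\<lambda>i j. mmul (taboo Lm L0 Lp n a (k + 1)) Lm i j + mmul (taboo Lm L0 Lp n a k) L0 i j
            + mmul (taboo Lm L0 Lp n a (k - 1)) Lp i j))"

declare taboo.simps(2) [simp del]

lemma taboo_Suc_apply:
  "taboo Lm L0 Lp (Suc n) a k i j = (if k < 0 then 0 else
     mmul (taboo Lm L0 Lp n a (k + 1)) Lm i j + mmul (taboo Lm L0 Lp n a k) L0 i j
       + mmul (taboo Lm L0 Lp n a (k - 1)) Lp i j)"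
  by (simp add: taboo.simps(2))

lemma qbd_taboo_eq_taboo: "qbd_taboo Lm L0 Lp n k i j = taboo Lm L0 Lp n 0 k i j"
  by (induction n arbitrary: k i j) (simp_all add: idm_def taboo_Suc_apply mmul_def sum.distrib)

lemma taboo_from_negative: "a < 0 \<Longrightarrow> taboo Lm L0 Lp n a k = zm"
  by (induction n arbitrary: k) (auto simp: taboo.simps(2))

lemma taboo_nonneg: "nonneg Lm \<Longrightarrow> nonneg L0 \<Longrightarrow> nonneg Lp \<Longrightarrow> nonneg (taboo Lm L0 Lp n a k)"
  by (induction n arbitrary: k)
     (auto simp: taboo.simps(2) idm_def mmul_nonneg[unfolded nonneg_def] nonneg_def
       intro!: add_nonneg_nonneg)

lemma taboo_first_step:
  assumes "0 \<le> a"
  shows "taboo Lm L0 Lp (Suc n) a k = (\<lambda>i j. mmul Lm (taboo Lm L0 Lp n (a - 1) k) i j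
           + mmul L0 (taboo Lm L0 Lp n a k) i j + mmul Lp (taboo Lm L0 Lp n (a + 1) k) i j)"
  using assms
proof (induction n arbitrary: k)
  case 0
  show ?case
  proof (intro ext)
    fix i j
    show "taboo Lm L0 Lp (Suc 0) a k i j = mmul Lm (taboo Lm L0 Lp 0 (a - 1) k) i j
           + mmul L0 (taboo Lm L0 Lp 0 a k) i j + mmul Lp (taboo Lm L0 Lp 0 (a + 1) k) i j"
      using 0 by (cases "k < 0"; cases "k = a - 1"; cases "k = a"; cases "k = a + 1")
                 (simp_all add: taboo_Suc_apply)
  qed
next
  case (Suc n)
  define h where "h = taboo Lm L0 Lp n"
  define g where "g = taboo Lm L0 Lp (Suc n)"
  have IH: "g a k' = (\<lambda>i j. mmul Lm (h (a - 1) k') i j + mmul L0 (h a k') i j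
                          + mmul Lp (h (a + 1) k') i j)" for k'
    using Suc by (simp add: g_def h_def)
  show ?case
  proof (cases "k < 0")
    case True
    then show ?thesis by (simp add: taboo.simps(2))
  next
    case False
    have last_step: "g x k = (\<lambda>i j. mmul (h x (k + 1)) Lm i j + mmul (h x k) L0 i j
                              + mmul (h x (k - 1)) Lp i j)" for x
      using False by (simp add: taboo.simps(2) g_def h_def)
    show ?thesis
    proof (intro ext)
      fix i j
      have "taboo Lm L0 Lp (Suc (Suc n)) a k i j
          = mmul (g a (k + 1)) Lm i j + mmul (g a k) L0 i j + mmul (g a (k - 1)) Lp i j"
        using False by (simp add: taboo_Suc_apply g_def)
      also have "\<dots> = mmul Lm (mmul (h (a-1) (k+1)) Lm) i j + mmul L0 (mmul (h a (k+1)) Lm) i j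
          + mmul Lp (mmul (h (a+1) (k+1)) Lm) i j
          + (mmul Lm (mmul (h (a-1) k) L0) i j + mmul L0 (mmul (h a k) L0) i j
          + mmul Lp (mmul (h (a+1) k) L0) i j)
          + (mmul Lm (mmul (h (a-1) (k-1)) Lp) i j + mmul L0 (mmul (h a (k-1)) Lp) i j
          + mmul Lp (mmul (h (a+1) (k-1)) Lp) i j)"
        by (simp only: IH) (simp add: mmul_assoc)
      also have "\<dots> = mmul Lm (g (a - 1) k) i j + mmul L0 (g a k) i j + mmul Lp (g (a + 1) k) i j"
        by (simp only: last_step) (simp add: mmul_assoc)
      finally show "taboo Lm L0 Lp (Suc (Suc n)) a k i j
          = mmul Lm (taboo Lm L0 Lp (Suc n) (a - 1) k) i j + mmul L0 (taboo Lm L0 Lp (Suc n) a k) i j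
            + mmul Lp (taboo Lm L0 Lp (Suc n) (a + 1) k) i j"
        by (simp add: g_def)
    qed
  qed
qed

text \<open>Probabilities of reaching level \<open>-1\<close> from level \<open>a\<close> within \<open>N\<close> steps, with level \<open>-1\<close>
  itself counted as reached.\<close>

definition first_passage :: "('s::finite \<Rightarrow> 's \<Rightarrow> real) \<Rightarrow> ('s \<Rightarrow> 's \<Rightarrow> real) \<Rightarrow> ('s \<Rightarrow> 's \<Rightarrow> real)
    \<Rightarrow> nat \<Rightarrow> int \<Rightarrow> 's \<Rightarrow> 's \<Rightarrow> real" where
  "first_passage Lm L0 Lp N a = (if a = -1 then idm else if a < -1 then zm else
      (\<lambda>i j. \<Sum>n<N. mmul (taboo Lm L0 Lp n a 0) Lm i j))"

lemma first_passage_0: "0 \<le> a \<Longrightarrow> first_passage Lm L0 Lp 0 a = zm"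
  by (simp add: first_passage_def)

lemma first_passage_minus_1: "first_passage Lm L0 Lp N (-1) = idm"
  by (simp add: first_passage_def)

lemma first_passage_level_0:
  "first_passage Lm L0 Lp N 0 i j = (\<Sum>n<N. \<Sum>l\<in>UNIV. qbd_taboo Lm L0 Lp n 0 i l * Lm l j)"
  by (simp add: first_passage_def qbd_taboo_eq_taboo mmul_def)

lemma first_passage_first_step:
  assumes a: "0 \<le> a"
  shows "first_passage Lm L0 Lp (Suc N) a i j = mmul Lm (first_passage Lm L0 Lp N (a - 1)) i j
     + mmul L0 (first_passage Lm L0 Lp N a) i j + mmul Lp (first_passage Lm L0 Lp N (a + 1)) i j"
proof -
  define f where "f = taboo Lm L0 Lp"
  have "first_passage Lm L0 Lp (Suc N) a i j = mmul (f 0 a 0) Lm i j +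
     (\<Sum>n<N. mmul Lm (mmul (f n (a-1) 0) Lm) i j + mmul L0 (mmul (f n a 0) Lm) i j
        + mmul Lp (mmul (f n (a+1) 0) Lm) i j)"
    using a by (simp add: first_passage_def sum.lessThan_Suc_shift taboo_first_step mmul_assoc f_def
                  del: sum.lessThan_Suc)
  also have "\<dots> = mmul (f 0 a 0) Lm i j + (mmul Lm (\<lambda>i j. \<Sum>n<N. mmul (f n (a-1) 0) Lm i j) i j
     + mmul L0 (\<lambda>i j. \<Sum>n<N. mmul (f n a 0) Lm i j) i j
     + mmul Lp (\<lambda>i j. \<Sum>n<N. mmul (f n (a+1) 0) Lm i j) i j)"
    by (simp add: mmul_sum_right sum.distrib)
  also have "\<dots> = mmul Lm (first_passage Lm L0 Lp N (a - 1)) i j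
     + mmul L0 (first_passage Lm L0 Lp N a) i j + mmul Lp (first_passage Lm L0 Lp N (a + 1)) i j"
    using a by (cases "a = 0") (simp_all add: first_passage_def f_def taboo_from_negative)
  finally show ?thesis .
qed

locale nonneg_qbd =
  fixes Lm L0 Lp :: "'s::finite \<Rightarrow> 's \<Rightarrow> real"
  assumes nonneg_Lm: "nonneg Lm" and nonneg_L0: "nonneg L0" and nonneg_Lp: "nonneg Lp"
begin

abbreviation "F \<equiv> first_passage Lm L0 Lp"

lemma nonneg_first_passage: "nonneg (F N a)"
  using mmul_nonneg[OF taboo_nonneg[OF nonneg_Lm nonneg_L0 nonneg_Lp] nonneg_Lm]
  by (auto simp: first_passage_def idm_def nonneg_def intro!: sum_nonneg)

lemma first_passage_mono: "N \<le> M \<Longrightarrow> F N a \<le> F M a"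
  using mmul_nonneg[OF taboo_nonneg[OF nonneg_Lm nonneg_L0 nonneg_Lp] nonneg_Lm]
  by (auto simp: first_passage_def mat_le_iff nonneg_def intro!: sum_mono2)

lemma first_passage_le_mpow:
  assumes X: "nonneg X" "qbd_rhs Lm L0 Lp X \<le> X"
  shows "-1 \<le> a \<Longrightarrow> F N a \<le> mpow X (nat (a + 1))"
proof (induction N arbitrary: a)
  case 0
  then show ?case
    using mpow_nonneg[OF X(1)] by (cases "a = -1") (auto simp: first_passage_def mat_le_iff nonneg_def)
next
  case (Suc N a)
  show ?case
  proof (cases "a = -1")
    case True then show ?thesis by (simp add: first_passage_minus_1)
  next
    case False
    then have a: "0 \<le> a" using Suc.prems by simp
    then obtain m where m: "a = int m" using nonneg_int_cases by blast
    have IH: "F N (a - 1) \<le> mpow X m" "F N a \<le> mpow X (Suc m)" "F N (a + 1) \<le> mpow X (Suc (Suc m))"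
      using Suc.IH[of "a - 1"] Suc.IH[of a] Suc.IH[of "a + 1"] by (simp_all add: m nat_add_distrib)
    show ?thesis
      unfolding mat_le_iff
    proof (intro allI)
      fix i j
      have "F (Suc N) a i j = mmul Lm (F N (a - 1)) i j + mmul L0 (F N a) i j + mmul Lp (F N (a + 1)) i j"
        using first_passage_first_step[OF a] .
      also have "\<dots> \<le> mmul Lm (mpow X m) i j + mmul L0 (mpow X (Suc m)) i j
                    + mmul Lp (mpow X (Suc (Suc m))) i j"
        by (intro add_mono mmul_mono_right nonneg_Lm nonneg_L0 nonneg_Lp IH)
      also have "\<dots> = mmul (qbd_rhs Lm L0 Lp X) (mpow X m) i j"
        by (simp add: qbd_rhs_def mmul_assoc)
      also have "\<dots> \<le> mmul X (mpow X m) i j"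
        using X by (intro mmul_mono_left mpow_nonneg)
      also have "\<dots> = mpow X (nat (a + 1)) i j"
        by (simp add: m nat_add_distrib)
      finally show "F (Suc N) a i j \<le> mpow X (nat (a + 1)) i j" .
    qed
  qed
qed


text \<open>A passage from level \<open>a + b + 1\<close> down to \<open>-1\<close> is a passage down to \<open>b\<close> followed by one
  from \<open>b\<close> down to \<open>-1\<close>; the following two inequalities make this precise.\<close>

lemma first_passage_submult:
  assumes b: "-1 \<le> b"
  shows "-1 \<le> a \<Longrightarrow> F N (a + b + 1) \<le> mmul (F N a) (F N b)"
proof (induction N arbitrary: a)
  case 0
  show ?case
  proof (cases "a = -1")
    case True then show ?thesis by (simp add: first_passage_minus_1)
  next
    case False
    then have "0 \<le> a + b + 1" using 0 b by simp
    then show ?thesis using mmul_nonneg[OF nonneg_first_passage nonneg_first_passage, of 0 a 0 b]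
      by (simp add: first_passage_0 mat_le_iff nonneg_def)
  qed
next
  case (Suc N a)
  show ?case
  proof (cases "a = -1")
    case True then show ?thesis by (simp add: first_passage_minus_1)
  next
    case False
    then have a: "0 \<le> a" using Suc.prems by simp
    have ab: "0 \<le> a + b + 1" using a b by simp
    have IH: "F N (a + b) \<le> mmul (F N (a - 1)) (F N b)" "F N (a + b + 1) \<le> mmul (F N a) (F N b)"
        "F N (a + b + 1 + 1) \<le> mmul (F N (a + 1)) (F N b)"
      using Suc.IH[of "a - 1"] Suc.IH[of a] Suc.IH[of "a + 1"] a
      by (simp_all add: algebra_simps)
    show ?thesis
      unfolding mat_le_iff
    proof (intro allI)
      fix i j
      have "F (Suc N) (a + b + 1) i j = mmul Lm (F N (a + b)) i j + mmul L0 (F N (a + b + 1)) i j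
           + mmul Lp (F N (a + b + 1 + 1)) i j"
        using first_passage_first_step[OF ab] by simp
      also have "\<dots> \<le> mmul Lm (mmul (F N (a - 1)) (F N b)) i j + mmul L0 (mmul (F N a) (F N b)) i j
           + mmul Lp (mmul (F N (a + 1)) (F N b)) i j"
        by (intro add_mono mmul_mono_right nonneg_Lm nonneg_L0 nonneg_Lp IH)
      also have "\<dots> = mmul (F (Suc N) a) (F N b) i j"
        by (simp add: first_passage_first_step[OF a, abs_def] mmul_assoc)
      also have "\<dots> \<le> mmul (F (Suc N) a) (F (Suc N) b) i j"
        by (intro mmul_mono_right nonneg_first_passage first_passage_mono) simp
      finally show "F (Suc N) (a + b + 1) i j \<le> mmul (F (Suc N) a) (F (Suc N) b) i j" .
    qed
  qed
qed

lemma first_passage_supermult: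
  assumes b: "-1 \<le> b"
  shows "-1 \<le> a \<Longrightarrow> mmul (F M a) (F N b) \<le> F (M + N) (a + b + 1)"
proof (induction M arbitrary: a)
  case 0
  show ?case
  proof (cases "a = -1")
    case True then show ?thesis by (simp add: first_passage_minus_1)
  next
    case False
    then have "0 \<le> a" using 0 by simp
    then show ?thesis using nonneg_first_passage[of N "a + b + 1"]
      by (simp add: first_passage_0 mat_le_iff nonneg_def)
  qed
next
  case (Suc M a)
  show ?case
  proof (cases "a = -1")
    case True then show ?thesis
      using first_passage_mono[of N "Suc M + N" b] by (simp add: first_passage_minus_1)
  next
    case False
    then have a: "0 \<le> a" using Suc.prems by simp
    have ab: "0 \<le> a + b + 1" using a b by simp
    have IH: "mmul (F M (a - 1)) (F N b) \<le> F (M + N) (a + b)"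
        "mmul (F M a) (F N b) \<le> F (M + N) (a + b + 1)"
        "mmul (F M (a + 1)) (F N b) \<le> F (M + N) (a + b + 1 + 1)"
      using Suc.IH[of "a - 1"] Suc.IH[of a] Suc.IH[of "a + 1"] a
      by (simp_all add: algebra_simps)
    show ?thesis
      unfolding mat_le_iff
    proof (intro allI)
      fix i j
      have "mmul (F (Suc M) a) (F N b) i j = mmul Lm (mmul (F M (a - 1)) (F N b)) i j
           + mmul L0 (mmul (F M a) (F N b)) i j + mmul Lp (mmul (F M (a + 1)) (F N b)) i j"
        by (simp add: first_passage_first_step[OF a, abs_def] mmul_assoc)
      also have "\<dots> \<le> mmul Lm (F (M + N) (a + b)) i j + mmul L0 (F (M + N) (a + b + 1)) i j
           + mmul Lp (F (M + N) (a + b + 1 + 1)) i j"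
        by (intro add_mono mmul_mono_right nonneg_Lm nonneg_L0 nonneg_Lp IH)
      also have "\<dots> = F (Suc (M + N)) (a + b + 1) i j"
        using first_passage_first_step[OF ab, of Lm L0 Lp "M + N" i j] by simp
      finally show "mmul (F (Suc M) a) (F N b) i j \<le> F (Suc M + N) (a + b + 1) i j"
        by simp
    qed
  qed
qed

end

text \<open>A nonnegative supersolution bounds the partial sums of the series defining \<open>qbd_G\<close>;
  without it that series might diverge and \<open>qbd_G\<close> would be meaningless.\<close>

locale nonneg_qbd_supersolution = nonneg_qbd +
  fixes X0 :: "'a::finite \<Rightarrow> 'a \<Rightarrow> real"
  assumes nonneg_X0: "nonneg X0" and supersolution_X0: "qbd_rhs Lm L0 Lp X0 \<le> X0"
begin

abbreviation "G \<equiv> qbd_G Lm L0 Lp"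

lemma first_passage_le_supersolution: "nonneg Y \<Longrightarrow> qbd_rhs Lm L0 Lp Y \<le> Y \<Longrightarrow> F N 0 i j \<le> Y i j"
  using first_passage_le_mpow[of Y 0 N] by (simp add: mat_le_iff)

lemma qbd_G_term_nonneg: "0 \<le> (\<Sum>l\<in>UNIV. qbd_taboo Lm L0 Lp n 0 i l * Lm l j)"
  using taboo_nonneg[OF nonneg_Lm nonneg_L0 nonneg_Lp] nonneg_Lm
  by (auto simp: qbd_taboo_eq_taboo nonneg_def intro!: sum_nonneg)

lemma summable_qbd_G_terms: "summable (\<lambda>n. \<Sum>l\<in>UNIV. qbd_taboo Lm L0 Lp n 0 i l * Lm l j)"
  by (rule summableI_nonneg_bounded[where x = "X0 i j"])
     (use qbd_G_term_nonneg first_passage_le_supersolution[OF nonneg_X0 supersolution_X0] in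
       \<open>auto simp: first_passage_level_0[symmetric]\<close>)

lemma first_passage_tendsto_G: "(\<lambda>N. F N 0 i j) \<longlonglongrightarrow> G i j"
  unfolding first_passage_level_0 qbd_G_def by (rule summable_LIMSEQ[OF summable_qbd_G_terms])

lemma first_passage_le_G: "F N 0 \<le> G"
  unfolding mat_le_iff first_passage_level_0 qbd_G_def
  by (auto intro!: sum_le_suminf summable_qbd_G_terms qbd_G_term_nonneg)

lemma nonneg_G: "nonneg G"
  unfolding nonneg_def qbd_G_def
  by (auto intro!: suminf_nonneg summable_qbd_G_terms qbd_G_term_nonneg)

lemma G_least:
  assumes "nonneg Y" and "qbd_rhs Lm L0 Lp Y \<le> Y"
  shows "G \<le> Y"
  unfolding mat_le_iff qbd_G_def using first_passage_le_supersolution[OF assms]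
  by (auto intro!: suminf_le_const[OF summable_qbd_G_terms] simp: first_passage_level_0[symmetric])

lemma first_passage_Suc_0:
  "F (Suc N) 0 i j = Lm i j + mmul L0 (F N 0) i j + mmul Lp (F N 1) i j"
  using first_passage_first_step[of 0] by (simp add: first_passage_minus_1)

lemma G_le_rhs: "G \<le> qbd_rhs Lm L0 Lp G"
  unfolding mat_le_iff
proof (intro allI)
  fix i j
  have "F N 0 i j \<le> qbd_rhs Lm L0 Lp G i j" for N
  proof (cases N)
    case 0
    then show ?thesis
      using nonneg_Lm mmul_nonneg[OF nonneg_L0 nonneg_G]
        mmul_nonneg[OF nonneg_Lp mmul_nonneg[OF nonneg_G nonneg_G]]
      by (simp add: first_passage_0 qbd_rhs_def nonneg_def)
  next
    case (Suc M)
    have "F M 1 \<le> mmul (F M 0) (F M 0)"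
      using first_passage_submult[of 0 0 M] by simp
    also have "\<dots> \<le> mmul G G"
      by (intro mmul_mono nonneg_first_passage first_passage_le_G)
    finally have "F M 1 \<le> mmul G G" .
    then show ?thesis
      unfolding Suc first_passage_Suc_0 qbd_rhs_def
      by (intro add_mono mmul_mono_right nonneg_L0 nonneg_Lp first_passage_le_G) simp_all
  qed
  then show "G i j \<le> qbd_rhs Lm L0 Lp G i j"
    by (intro LIMSEQ_le_const2[OF first_passage_tendsto_G]) auto
qed

lemma rhs_le_G: "qbd_rhs Lm L0 Lp G \<le> G"
  unfolding mat_le_iff
proof (intro allI)
  fix i j
  have "qbd_rhs Lm L0 Lp (F N 0) i j \<le> G i j" for N
  proof -
    have "qbd_rhs Lm L0 Lp (F N 0) i j \<le> Lm i j + mmul L0 (F (N + N) 0) i j + mmul Lp (F (N + N) 1) i j"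
      unfolding qbd_rhs_def
      using first_passage_supermult[of 0 0 N N] first_passage_mono[of N "N + N" 0]
      by (intro add_mono mmul_mono_right nonneg_L0 nonneg_Lp) auto
    also have "\<dots> = F (Suc (N + N)) 0 i j"
      by (rule first_passage_Suc_0[symmetric])
    also have "\<dots> \<le> G i j"
      using first_passage_le_G by (simp add: mat_le_iff)
    finally show ?thesis .
  qed
  moreover have "(\<lambda>N. qbd_rhs Lm L0 Lp (F N 0) i j) \<longlonglongrightarrow> qbd_rhs Lm L0 Lp G i j"
    unfolding qbd_rhs_def by (intro tendsto_intros mmul_tendsto first_passage_tendsto_G)
  ultimately show "qbd_rhs Lm L0 Lp G i j \<le> G i j"
    by (intro LIMSEQ_le_const2) auto
qed

lemma G_solution: "G = qbd_rhs Lm L0 Lp G"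
  using G_le_rhs rhs_le_G by (rule antisym)

end

lemma qbd_G_eq_if_same_solutions:
  assumes "nonneg_qbd Lm L0 Lp" and "nonneg_qbd Lm' L0' Lp'"
    and same: "\<And>X. qbd_rhs Lm L0 Lp X = X \<longleftrightarrow> qbd_rhs Lm' L0' Lp' X = X"
    and "nonneg Y" and "qbd_rhs Lm L0 Lp Y = Y"
  shows "qbd_G Lm L0 Lp = qbd_G Lm' L0' Lp'"
proof -
  interpret q: nonneg_qbd_supersolution Lm L0 Lp Y
    using assms(1,4,5) by (simp add: nonneg_qbd_supersolution_def nonneg_qbd_supersolution_axioms_def)
  interpret q': nonneg_qbd_supersolution Lm' L0' Lp' Y
    using assms(2,4,5) same by (simp add: nonneg_qbd_supersolution_def nonneg_qbd_supersolution_axioms_def)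
  show ?thesis
  proof (rule antisym)
    show "q.G \<le> q'.G"
      using q'.G_solution[symmetric] same[of q'.G] by (intro q.G_least q'.nonneg_G) simp
    show "q'.G \<le> q.G"
      using q.G_solution[symmetric] same[of q.G] by (intro q'.G_least q.nonneg_G) simp
  qed
qed

section \<open>The three QBDs of the fluid queue\<close>

lemma lazy_qbd_same_solutions:
  fixes X :: "('p::finite + 'm::finite) \<Rightarrow> ('p + 'm) \<Rightarrow> real"
  shows "qbd_rhs (blk zm (\<lambda>i j. Ppm i j / 2) zm Pmm) (blk (\<lambda>i j. Ppp i j / 2) zm Pmp zm)
           (blk (\<lambda>i j. idm i j / 2) zm zm zm) X = X
     \<longleftrightarrow> qbd_rhs (blk zm (\<lambda>i j. Ppm i j / 2) zm (\<lambda>i j. Pmm i j / 2))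
           (blk (\<lambda>i j. Ppp i j / 2) zm (\<lambda>i j. Pmp i j / 2) (\<lambda>i j. idm i j / 2))
           (blk (\<lambda>i j. idm i j / 2) zm zm zm) X = X"
proof -
  obtain A B C D where X: "X = blk A B C D"
    using blk_blocks by metis
  show ?thesis
    unfolding X qbd_rhs_def block_mat_eq_iff[of _ "blk A B C D"]
    by (simp add: bpp_def bpm_def bmp_def bmm_def mmul_blk fun_eq_iff) (auto simp: field_simps)
qed

locale fluid_queue =
  fixes T :: "('p::finite + 'm::finite) \<Rightarrow> ('p + 'm) \<Rightarrow> real"
    and Psi :: "'p \<Rightarrow> 'm \<Rightarrow> real"
    and mu :: real
  assumes generator: "is_generator T"
    and Psi: "is_min_nonneg_sol T Psi"
    and mu_pos: "0 < mu"
    and mu_ge: "\<forall>i. \<bar>T i i\<bar> \<le> mu"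
begin

definition P :: "('p + 'm) \<Rightarrow> ('p + 'm) \<Rightarrow> real" where
  "P = (\<lambda>i j. idm i j + T i j / mu)"

definition V :: "'m \<Rightarrow> 'm \<Rightarrow> real" where
  "V = (\<lambda>i j. idm i j + (bmm T i j + mmul (bmp T) Psi i j) / mu)"

definition W :: "'p \<Rightarrow> 'p \<Rightarrow> real" where
  "W = minv (\<lambda>i j. idm i j - bpp T i j / mu)"

lemma blocks_P:
  "bpp P = (\<lambda>i j. idm i j + bpp T i j / mu)" "bpm P = (\<lambda>i j. bpm T i j / mu)"
  "bmp P = (\<lambda>i j. bmp T i j / mu)" "bmm P = (\<lambda>i j. idm i j + bmm T i j / mu)"
  by (auto simp: P_def bpp_def bpm_def bmp_def bmm_def idm_def intro!: ext)

lemma nonneg_P: "nonneg P"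
  unfolding nonneg_def P_def
proof (intro allI)
  fix i j
  show "0 \<le> idm i j + T i j / mu"
  proof (cases "i = j")
    case True
    have "- T i i \<le> mu" using mu_ge by (metis abs_le_D2)
    then show ?thesis using True mu_pos by (simp add: idm_def field_simps)
  next
    case False
    then show ?thesis using generator mu_pos by (simp add: idm_def is_generator_def)
  qed
qed

lemma row_sum_P: "(\<Sum>j\<in>UNIV. P i j) = 1"
proof -
  have "(\<Sum>j\<in>UNIV. P i j) = (\<Sum>j\<in>UNIV. idm i j) + (\<Sum>j\<in>UNIV. T i j) / mu"
    by (simp add: P_def sum.distrib sum_divide_distrib)
  also have "\<dots> = 1" using generator by (simp add: is_generator_def idm_def)
  finally show ?thesis .
qed

lemma nonneg_blocks_P: "nonneg (bpp P)" "nonneg (bpm P)" "nonneg (bmp P)" "nonneg (bmm P)"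
  using nonneg_blocks[OF nonneg_P] by simp_all

lemma row_sum_bpp_P_le: "(\<Sum>j\<in>UNIV. bpp P i j) \<le> 1"
proof -
  have "(\<Sum>j\<in>UNIV. bpp P i j) \<le> (\<Sum>j\<in>UNIV. P (Inl i) (Inl j)) + (\<Sum>j\<in>UNIV. P (Inl i) (Inr j))"
    using nonneg_P by (simp add: bpp_def nonneg_def sum_nonneg)
  also have "\<dots> = 1" using row_sum_P[of "Inl i"] by (simp add: sum_UNIV_Plus)
  finally show ?thesis .
qed

lemma contraction_half_bpp_P: "substochastic_contraction (\<lambda>i j. bpp P i j / 2) (1/2)"
  using nonneg_blocks_P(1) row_sum_bpp_P_le
  by unfold_locales (auto simp: nonneg_def sum_divide_distrib[symmetric])

lemma I_minus_bpp_T: "(\<lambda>i j. idm i j - bpp T i j / mu) = (\<lambda>i j. 2 * idm i j - bpp P i j)"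
  using mu_pos by (auto simp: blocks_P field_simps intro!: ext)

lemma half_neumann_inverse:
  defines "Q \<equiv> \<lambda>i j. bpp P i j / 2"
  shows "mmul (\<lambda>i j. 2 * idm i j - bpp P i j) (\<lambda>i j. neumann Q i j / 2) = idm"
    and "mmul (\<lambda>i j. neumann Q i j / 2) (\<lambda>i j. 2 * idm i j - bpp P i j) = idm"
proof -
  interpret substochastic_contraction Q "1/2"
    unfolding Q_def by (rule contraction_half_bpp_P)
  have "mmul (\<lambda>i j. 2 * idm i j - bpp P i j) (\<lambda>i j. neumann Q i j / 2)
      = mmul (\<lambda>i j. idm i j - Q i j) (neumann Q)"
    "mmul (\<lambda>i j. neumann Q i j / 2) (\<lambda>i j. 2 * idm i j - bpp P i j)
      = mmul (neumann Q) (\<lambda>i j. idm i j - Q i j)"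
    by (simp_all add: fun_eq_iff Q_def)
  then show "mmul (\<lambda>i j. 2 * idm i j - bpp P i j) (\<lambda>i j. neumann Q i j / 2) = idm"
    and "mmul (\<lambda>i j. neumann Q i j / 2) (\<lambda>i j. 2 * idm i j - bpp P i j) = idm"
    by (simp_all only: neumann_inverse)
qed

lemma W_eq_half_neumann: "W = (\<lambda>i j. neumann (\<lambda>i j. bpp P i j / 2) i j / 2)"
  unfolding W_def I_minus_bpp_T by (rule minv_eqI[OF half_neumann_inverse])

lemma W_inverse:
  "mmul (\<lambda>i j. 2 * idm i j - bpp P i j) W = idm" "mmul W (\<lambda>i j. 2 * idm i j - bpp P i j) = idm"
  unfolding W_eq_half_neumann by (fact half_neumann_inverse)+

lemma nonneg_W: "nonneg W"
  using substochastic_contraction.nonneg_neumann[OF contraction_half_bpp_P]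
  by (simp add: W_eq_half_neumann nonneg_def)

lemma riccati_iff_lazy_fixed_point:
  "riccati T B \<longleftrightarrow> (\<forall>i j. 2 * B i j = bpm P i j + mmul (bpp P) B i j
                         + mmul B (\<lambda>k l. bmm P k l + mmul (bmp P) B k l) i j)"
proof -
  have "bpm T i j + mmul B (bmm T) i j + mmul (bpp T) B i j + mmul (mmul B (bmp T)) B i j
      = mu * (bpm P i j + mmul (bpp P) B i j + mmul B (\<lambda>k l. bmm P k l + mmul (bmp P) B k l) i j
              - 2 * B i j)" for i j
    using mu_pos by (simp add: blocks_P mmul_assoc field_simps)
  then show ?thesis
    unfolding riccati_def using mu_pos by auto
qed

lemma nonneg_Psi: "nonneg Psi"
  using Psi by (simp add: is_min_nonneg_sol_def nonneg_def)

lemma Psi_least: "riccati T B \<Longrightarrow> nonneg B \<Longrightarrow> Psi \<le> B"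
  using Psi by (simp add: is_min_nonneg_sol_def nonneg_def mat_le_iff)

lemma V_eq: "V = (\<lambda>i j. bmm P i j + mmul (bmp P) Psi i j)"
  by (auto simp: V_def blocks_P add_divide_distrib intro!: ext)

lemma nonneg_V: "nonneg V"
  using mmul_nonneg[OF nonneg_blocks_P(3) nonneg_Psi] nonneg_blocks_P(4)
  by (auto simp: V_eq nonneg_def)

lemma Psi_lazy_fixed_point: "2 * Psi i j = bpm P i j + mmul (bpp P) Psi i j + mmul Psi V i j"
  using Psi riccati_iff_lazy_fixed_point by (simp add: is_min_nonneg_sol_def V_eq)

text \<open>Blocks \<open>\<Theta>\<^sub>d\<close> of QBD (i), \<open>B'\<^sub>d\<close> of (ii) and \<open>B\<^sub>d\<close> of (iii), for \<open>d = -1, 0, 1\<close>;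
  \<open>\<Theta>\<^sub>1 = B'\<^sub>1\<close> and \<open>B\<^sub>0 = 0\<close>.\<close>

abbreviation "Th_dn \<equiv> blk zm (\<lambda>i j. bpm P i j / 2) zm (bmm P)"
abbreviation "Th_0 \<equiv> blk (\<lambda>i j. bpp P i j / 2) zm (bmp P) zm"
abbreviation "Bl_dn \<equiv> blk zm (\<lambda>i j. bpm P i j / 2) zm (\<lambda>i j. bmm P i j / 2)"
abbreviation "Bl_0 \<equiv> blk (\<lambda>i j. bpp P i j / 2) zm (\<lambda>i j. bmp P i j / 2) (\<lambda>i j. idm i j / 2)"
abbreviation "Bl_up \<equiv> blk (\<lambda>i j. idm i j / 2) zm zm zm"
abbreviation "B_dn \<equiv> blk zm (mmul W (bpm P)) zm V"
abbreviation "B_up \<equiv> blk W zm zm zm"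

lemma qbd_rhs_Bl:
  "qbd_rhs Bl_dn Bl_0 Bl_up (blk zm B zm D) =
     blk zm (\<lambda>i j. (bpm P i j + mmul (bpp P) B i j + mmul B D i j) / 2)
         zm (\<lambda>i j. (bmm P i j + mmul (bmp P) B i j + D i j) / 2)"
  by (simp add: qbd_rhs_def block_mat_eq_iff mmul_blk blocks_add fun_eq_iff add_divide_distrib)

lemma qbd_rhs_B:
  "qbd_rhs B_dn zm B_up (blk zm B zm D) =
     blk zm (\<lambda>i j. mmul W (bpm P) i j + mmul W (mmul B D) i j) zm V"
  by (simp add: qbd_rhs_def block_mat_eq_iff mmul_blk blocks_add fun_eq_iff)

lemma blk_solution_Bl_iff:
  "blk zm B zm D = qbd_rhs Bl_dn Bl_0 Bl_up (blk zm B zm D) \<longleftrightarrow>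
     (\<forall>i j. 2 * B i j = bpm P i j + mmul (bpp P) B i j + mmul B D i j)
     \<and> D = (\<lambda>i j. bmm P i j + mmul (bmp P) B i j)"
  unfolding qbd_rhs_Bl blk_eq_iff by (simp add: fun_eq_iff field_simps)

lemma blk_solution_B_iff:
  "blk zm B zm D = qbd_rhs B_dn zm B_up (blk zm B zm D) \<longleftrightarrow>
     B = mmul W (\<lambda>i j. bpm P i j + mmul B D i j) \<and> D = V"
  unfolding qbd_rhs_B blk_eq_iff by (simp add: fun_eq_iff)

abbreviation "Z \<equiv> blk zm Psi zm V"

lemma nonneg_Z: "nonneg Z"
  by (simp add: nonneg_blk_iff nonneg_zm nonneg_Psi nonneg_V)

lemma Z_solution_Bl: "qbd_rhs Bl_dn Bl_0 Bl_up Z = Z"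
  using blk_solution_Bl_iff[of Psi V] Psi_lazy_fixed_point by (simp add: V_eq)

lemma Z_solution_B: "qbd_rhs B_dn zm B_up Z = Z"
proof -
  have MPsi: "mmul (\<lambda>i j. 2 * idm i j - bpp P i j) Psi = (\<lambda>i j. bpm P i j + mmul Psi V i j)"
    using Psi_lazy_fixed_point by (simp add: fun_eq_iff)
  have "Psi = mmul (mmul W (\<lambda>i j. 2 * idm i j - bpp P i j)) Psi"
    by (simp add: W_inverse)
  also have "\<dots> = mmul W (\<lambda>i j. bpm P i j + mmul Psi V i j)"
    by (simp only: mmul_assoc MPsi)
  finally show ?thesis
    using blk_solution_B_iff[of Psi V] by simp
qed

lemma below_Z_blocks:
  assumes "nonneg X" and "X \<le> Z"
  shows "X = blk zm (bpm X) zm (bmm X)" and "bpm X \<le> Psi"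
proof -
  have "bpp X = zm" "bmp X = zm"
    using assms by (simp_all add: block_mat_le_iff nonneg_blocks nonneg_le_zm_iff)
  then show "X = blk zm (bpm X) zm (bmm X)"
    by (metis blk_blocks)
  show "bpm X \<le> Psi"
    using assms(2) by (simp add: block_mat_le_iff)
qed

lemma nonneg_qbd_Th: "nonneg_qbd Th_dn Th_0 Bl_up"
  by unfold_locales (simp_all add: nonneg_blk_iff nonneg_zm nonneg_halve nonneg_idm nonneg_blocks_P)

lemma supersolution_Bl_Z: "nonneg_qbd_supersolution Bl_dn Bl_0 Bl_up Z"
  by unfold_locales
     (simp_all add: nonneg_blk_iff nonneg_zm nonneg_halve nonneg_idm nonneg_blocks_P nonneg_Psi
        nonneg_V Z_solution_Bl)

lemma supersolution_B_Z: "nonneg_qbd_supersolution B_dn zm B_up Z"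
  by unfold_locales
     (simp_all add: nonneg_blk_iff nonneg_zm nonneg_blocks_P nonneg_W nonneg_V mmul_nonneg nonneg_Psi
        Z_solution_B)

lemma qbd_G_Bl: "qbd_G Bl_dn Bl_0 Bl_up = Z"
proof -
  interpret nonneg_qbd_supersolution Bl_dn Bl_0 Bl_up Z
    by (rule supersolution_Bl_Z)
  define B D where "B = bpm G" and "D = bmm G"
  have G_le_Z: "G \<le> Z"
    using nonneg_Z Z_solution_Bl by (intro G_least) simp_all
  have G: "G = blk zm B zm D" and "B \<le> Psi"
    using below_Z_blocks[OF nonneg_G G_le_Z] by (simp_all add: B_def D_def)
  have "blk zm B zm D = qbd_rhs Bl_dn Bl_0 Bl_up (blk zm B zm D)"
    using G_solution G by simp
  then have B_eq: "\<forall>i j. 2 * B i j = bpm P i j + mmul (bpp P) B i j + mmul B D i j"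
    and D: "D = (\<lambda>i j. bmm P i j + mmul (bmp P) B i j)"
    unfolding blk_solution_Bl_iff by blast+
  have "riccati T B"
    unfolding riccati_iff_lazy_fixed_point using B_eq by (simp add: D[symmetric])
  then have "Psi \<le> B"
    using nonneg_blocks[OF nonneg_G] by (intro Psi_least) (simp_all add: B_def)
  with \<open>B \<le> Psi\<close> have "B = Psi"
    by simp
  with G D show ?thesis
    by (simp add: V_eq)
qed

lemma lazy_supersolution:
  assumes "B \<le> Psi" and B: "B = mmul W (\<lambda>i j. bpm P i j + mmul B V i j)"
  shows "qbd_rhs Bl_dn Bl_0 Bl_up (blk zm B zm V) \<le> blk zm B zm V"
proof -
  have MB: "mmul (\<lambda>i j. 2 * idm i j - bpp P i j) B = (\<lambda>i j. bpm P i j + mmul B V i j)"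
    by (subst B) (simp add: mmul_assoc[symmetric] W_inverse)
  have "(\<lambda>i j. (bpm P i j + mmul (bpp P) B i j + mmul B V i j) / 2) = B"
  proof (intro ext)
    fix i j
    have "2 * B i j - mmul (bpp P) B i j = bpm P i j + mmul B V i j"
      using fun_cong[OF fun_cong[OF MB], of i j] by simp
    then show "(bpm P i j + mmul (bpp P) B i j + mmul B V i j) / 2 = B i j"
      by (simp add: field_simps)
  qed
  moreover have "(\<lambda>i j. (bmm P i j + mmul (bmp P) B i j + V i j) / 2) \<le> V"
    using mmul_mono_right[OF nonneg_blocks_P(3) assms(1)] by (simp add: mat_le_iff V_eq)
  ultimately show ?thesis
    by (simp add: qbd_rhs_Bl block_mat_le_iff)
qed

lemma qbd_G_B: "qbd_G B_dn zm B_up = Z"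
proof -
  interpret nonneg_qbd_supersolution B_dn zm B_up Z
    by (rule supersolution_B_Z)
  define B D where "B = bpm G" and "D = bmm G"
  have G_le_Z: "G \<le> Z"
    using nonneg_Z Z_solution_B by (intro G_least) simp_all
  have G: "G = blk zm B zm D" and "B \<le> Psi"
    using below_Z_blocks[OF nonneg_G G_le_Z] by (simp_all add: B_def D_def)
  have "blk zm B zm D = qbd_rhs B_dn zm B_up (blk zm B zm D)"
    using G_solution G by simp
  then have B_D: "B = mmul W (\<lambda>i j. bpm P i j + mmul B D i j)" and D: "D = V"
    unfolding blk_solution_B_iff by blast+
  have B: "B = mmul W (\<lambda>i j. bpm P i j + mmul B V i j)"
    using B_D unfolding D .
  have "nonneg B"
    using nonneg_blocks[OF nonneg_G] by (simp add: B_def)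
  then have "Z \<le> blk zm B zm V"
    using nonneg_qbd_supersolution.G_least[OF supersolution_Bl_Z] qbd_G_Bl
      lazy_supersolution[OF \<open>B \<le> Psi\<close> B] by (simp add: nonneg_blk_iff nonneg_zm nonneg_V)
  then have "B = Psi"
    using \<open>B \<le> Psi\<close> by (simp add: block_mat_le_iff)
  with G D show ?thesis
    by simp
qed

lemma qbd_G_Th: "qbd_G Th_dn Th_0 Bl_up = qbd_G Bl_dn Bl_0 Bl_up"
proof (rule qbd_G_eq_if_same_solutions[where Y = Z])
  show "nonneg_qbd Bl_dn Bl_0 Bl_up"
    using supersolution_Bl_Z by (simp add: nonneg_qbd_supersolution_def)
  show "qbd_rhs Th_dn Th_0 Bl_up Z = Z"
    using lazy_qbd_same_solutions Z_solution_Bl by blast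
qed (simp_all add: nonneg_qbd_Th lazy_qbd_same_solutions nonneg_Z)

end

theorem theorem4:
  fixes T :: "('p::finite + 'm::finite) \<Rightarrow> ('p + 'm) \<Rightarrow> real"
    and Psi :: "'p \<Rightarrow> 'm \<Rightarrow> real"
    and mu :: real
  assumes gen: "is_generator T"
    and Psi: "is_min_nonneg_sol T Psi"
    and mu_pos: "0 < mu"
    and mu_ge: "\<forall>i. \<bar>T i i\<bar> \<le> mu"
  defines "P \<equiv> (\<lambda>i j. idm i j + T i j / mu)"
    and "V \<equiv> (\<lambda>i j. idm i j + (bmm T i j + mmul (bmp T) Psi i j) / mu)"
    and "W \<equiv> minv (\<lambda>i j. idm i j - bpp T i j / mu)"
  shows "qbd_G (blk zm (\<lambda>i j. bpm P i j / 2) zm (bmm P))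
               (blk (\<lambda>i j. bpp P i j / 2) zm (bmp P) zm)
               (blk (\<lambda>i j. idm i j / 2) zm zm zm)
       = qbd_G (blk zm (\<lambda>i j. bpm P i j / 2) zm (\<lambda>i j. bmm P i j / 2))
               (blk (\<lambda>i j. bpp P i j / 2) zm (\<lambda>i j. bmp P i j / 2) (\<lambda>i j. idm i j / 2))
               (blk (\<lambda>i j. idm i j / 2) zm zm zm)
     \<and> qbd_G (blk zm (\<lambda>i j. bpm P i j / 2) zm (\<lambda>i j. bmm P i j / 2))
               (blk (\<lambda>i j. bpp P i j / 2) zm (\<lambda>i j. bmp P i j / 2) (\<lambda>i j. idm i j / 2))
               (blk (\<lambda>i j. idm i j / 2) zm zm zm)
       = qbd_G (blk zm (mmul W (bpm P)) zm V)
               zm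
               (blk W zm zm zm)"
proof -
  interpret fq: fluid_queue T Psi mu
    using gen Psi mu_pos mu_ge by unfold_locales
  have "P = fq.P" "V = fq.V" "W = fq.W"
    by (simp_all add: P_def V_def W_def fq.P_def fq.V_def fq.W_def)
  then show ?thesis
    using fq.qbd_G_Th fq.qbd_G_Bl fq.qbd_G_B by simp
qed

end
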